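(* For every integer $n\ge 1$, $a_n$ equals one plus the number of integer triples $(x,y,z)$ with $y,z\ge1$ and $x\ge 0$ satisfying $$n=2xyz+yz+x+y.$$ Moreover, $$a_n=1+\sum_{0\le j<n}D_{2j+1}(n-j).$$
   Context: For an integer $n\ge1$, $a_n$ denotes the number of integers $x$ with $0\le x\le n-1$ for which there exists a positive integer $h$ with $h\mid x$ and $(2x+1)\mid(2n-2h+1)$ (every positive integer divides $0$). For positive integers $m,N$, $D_m(N)$ denotes the number of positive divisors $d>1$ of $N$ with $d\equiv 1\pmod m$. *)

theory Defs
  imports "HOL-Number_Theory.Number_Theory"
begin

definition a :: "nat \<Rightarrow> nat" where
  "a n = card {x :: int. 0 \<le> x \<and> x \<le> int n - 1 \<and>
     (\<exists>h :: int. h > 0 \<and> h dvd x \<and> (2 * x + 1) dvd (2 * int n - 2 * h + 1))}"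

definition D :: "nat \<Rightarrow> nat \<Rightarrow> nat" where
  "D m N = card {d :: nat. d dvd N \<and> d > 1 \<and> [d = 1] (mod m)}"

end

(* Substituting X = y z, the equation n = 2xyz + yz + x + y becomes
   2n - 2y + 1 = (2X + 1)(2x + 1). So (x, y, z) |-> y z maps the solutions bijectively onto
   the nonzero elements counted by a n (with h = y), the element 0 supplying the extra 1;
   y is determined by X because two admissible values of h in [1, X] are congruent modulo
   the odd number 2X + 1. Equivalently n - x = y (1 + (2x + 1) z), so the solutions with
   x = j correspond to the divisors d = 1 + (2j + 1) z > 1 of n - j, d = 1 mod 2j + 1. *)
theory Submission
  imports Defs
begin

definition triples :: "nat \<Rightarrow> (int \<times> int \<times> int) set" where
  "triples n = {(x, y, z). x \<ge> 0 \<and> y \<ge> 1 \<and> z \<ge> 1 \<and> int n = 2 * x * y * z + y * z + x + y}"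

lemma triples_iff:
  "(x, y, z) \<in> triples n \<longleftrightarrow>
    x \<ge> 0 \<and> y \<ge> 1 \<and> z \<ge> 1 \<and> int n - x = y * (1 + (2 * x + 1) * z)"
  by (auto simp: triples_def algebra_simps)

lemma triples_factorization:
  assumes "(x, y, z) \<in> triples n"
  shows "2 * int n - 2 * y + 1 = (2 * (y * z) + 1) * (2 * x + 1)"
  using assms by (simp add: triples_def algebra_simps)

lemma triples_bounds:
  assumes "(x, y, z) \<in> triples n"
  shows "x + y * z < int n" "y \<le> y * z" "z \<le> y * z"
proof -
  have x: "x \<ge> 0" and y: "y \<ge> 1" and z: "z \<ge> 1"
    and n: "int n - x = y * (1 + (2 * x + 1) * z)"
    using assms by (auto simp: triples_iff)
  have "y * z * (2 * x) \<ge> 0" using x y z by simp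
  then show "x + y * z < int n" using n y by (simp add: algebra_simps)
  show "y \<le> y * z" "z \<le> y * z" using y z by simp_all
qed

lemma finite_triples: "finite (triples n)"
proof (rule finite_subset)
  show "triples n \<subseteq> {0..int n} \<times> {0..int n} \<times> {0..int n}"
  proof
    fix t assume t: "t \<in> triples n"
    obtain x y z where xyz: "t = (x, y, z)" by (cases t)
    have "x \<ge> 0" "y \<ge> 1" "z \<ge> 1" using t xyz by (simp_all add: triples_def)
    moreover have "x \<le> int n" "y \<le> int n" "z \<le> int n"
      using triples_bounds[OF t[unfolded xyz]] calculation by linarith+
    ultimately show "t \<in> {0..int n} \<times> {0..int n} \<times> {0..int n}" using xyz by simp
  qed
qed simp

definition a_set :: "nat \<Rightarrow> int set" where
  "a_set n = {x. 0 \<le> x \<and> x \<le> int n - 1 \<and>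
     (\<exists>h > 0. h dvd x \<and> (2 * x + 1) dvd (2 * int n - 2 * h + 1))}"

lemma a_eq_card_a_set: "a n = card (a_set n)"
  by (simp add: a_def a_set_def)

lemma odd_dvd_double_diff_imp_eq:
  fixes d u v :: int
  assumes "odd d" "d dvd 2 * (u - v)" "\<bar>u - v\<bar> < d"
  shows "u = v"
proof -
  have "coprime d 2" using assms(1) by (simp add: coprime_commute)
  then have "d dvd u - v" using assms(2) coprime_dvd_mult_right_iff by blast
  show ?thesis
  proof (rule ccontr)
    assume "u \<noteq> v"
    then have "\<bar>d\<bar> \<le> \<bar>u - v\<bar>" using dvd_imp_le_int \<open>d dvd u - v\<close> by simp
    then show False using assms(3) by linarith
  qed
qed

lemma product_in_a_set:
  assumes t: "(x, y, z) \<in> triples n"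
  shows "y * z \<in> a_set n - {0}"
proof -
  have "y \<ge> 1" "x \<ge> 0" using t by (simp_all add: triples_def)
  then have "1 \<le> y * z" "y * z \<le> int n - 1" using triples_bounds[OF t] by linarith+
  moreover have "y > 0" "y dvd y * z" "(2 * (y * z) + 1) dvd (2 * int n - 2 * y + 1)"
    using \<open>y \<ge> 1\<close> triples_factorization[OF t] by simp_all
  ultimately show ?thesis unfolding a_set_def by auto
qed

lemma a_set_elem_is_product:
  assumes X: "X \<in> a_set n" "X \<noteq> 0"
  obtains x y z where "(x, y, z) \<in> triples n" "X = y * z"
proof -
  obtain h where h: "0 < X" "X \<le> int n - 1" "h > 0" "h dvd X"
      "(2 * X + 1) dvd (2 * int n - 2 * h + 1)"
    using X by (auto simp: a_set_def)
  obtain z where z: "X = h * z" using \<open>h dvd X\<close> ..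
  have "z > 0" using h z zero_less_mult_pos by metis
  have "h \<le> X" using h zdvd_imp_le by blast
  obtain m where m: "2 * int n - 2 * h + 1 = (2 * X + 1) * m" using h(5) ..
  have "odd (2 * int n - 2 * h + 1)" by simp
  then have "odd m" unfolding m by simp
  then obtain x where x: "m = 2 * x + 1" by (auto elim: oddE)
  have "0 < (2 * X + 1) * m" using \<open>h \<le> X\<close> h(2) unfolding m[symmetric] by linarith
  with \<open>0 < X\<close> have "m > 0" by (simp add: zero_less_mult_iff)
  then have "x \<ge> 0" using x by linarith
  moreover have "2 * int n = 2 * (2 * x * h * z + h * z + x + h)"
    using m x z by (simp add: algebra_simps)
  ultimately have "(x, h, z) \<in> triples n" using h \<open>z > 0\<close> by (simp add: triples_def)
  then show thesis using that z by blast
qed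

lemma triples_eq_if_same_product:
  assumes t1: "(x1, y1, z1) \<in> triples n" and t2: "(x2, y2, z2) \<in> triples n"
    and same_product: "y1 * z1 = y2 * z2"
  shows "(x1, y1, z1) = (x2, y2, z2)"
proof -
  define X where "X = y1 * z1"
  have f1: "2 * int n - 2 * y1 + 1 = (2 * X + 1) * (2 * x1 + 1)"
    and f2: "2 * int n - 2 * y2 + 1 = (2 * X + 1) * (2 * x2 + 1)"
    using triples_factorization[OF t1] triples_factorization[OF t2] same_product
    by (simp_all add: X_def)
  have "2 * (y2 - y1) = (2 * X + 1) * (2 * x1 + 1) - (2 * X + 1) * (2 * x2 + 1)"
    using f1 f2 by simp
  then have "(2 * X + 1) dvd 2 * (y2 - y1)" by (metis dvd_diff dvd_triv_left)
  moreover have "\<bar>y2 - y1\<bar> < 2 * X + 1"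
  proof -
    have "y1 \<le> X" "y2 \<le> X" using triples_bounds(2)[OF t1] triples_bounds(2)[OF t2] same_product
      by (simp_all add: X_def)
    moreover have "y1 \<ge> 1" "y2 \<ge> 1" using t1 t2 by (simp_all add: triples_def)
    ultimately show ?thesis by linarith
  qed
  ultimately have "y1 = y2" using odd_dvd_double_diff_imp_eq[of "2 * X + 1" y2 y1] by simp
  have "2 * X + 1 \<noteq> 0" by presburger
  then have "x1 = x2" using f1 f2 \<open>y1 = y2\<close> by simp
  moreover have "z1 = z2" using same_product \<open>y1 = y2\<close> t1 by (simp add: triples_def)
  ultimately show ?thesis using \<open>y1 = y2\<close> by simp
qed

lemma bij_betw_triples_a_set: "bij_betw (\<lambda>(x, y, z). y * z) (triples n) (a_set n - {0})"
proof (rule bij_betw_imageI)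
  show "inj_on (\<lambda>(x, y, z). y * z) (triples n)"
  proof (rule inj_onI)
    fix s t assume "s \<in> triples n" "t \<in> triples n"
      and "(\<lambda>(x, y, z). y * z) s = (\<lambda>(x, y, z). y * z) t"
    moreover obtain x1 y1 z1 x2 y2 z2 where "s = (x1, y1, z1)" "t = (x2, y2, z2)"
      by (cases s, cases t)
    ultimately show "s = t" using triples_eq_if_same_product by simp
  qed
  show "(\<lambda>(x, y, z). y * z) ` triples n = a_set n - {0}"
  proof
    show "(\<lambda>(x, y, z). y * z) ` triples n \<subseteq> a_set n - {0}"
      using product_in_a_set by auto
    show "a_set n - {0} \<subseteq> (\<lambda>(x, y, z). y * z) ` triples n"
    proof
      fix X assume "X \<in> a_set n - {0}"
      then obtain x y z where "(x, y, z) \<in> triples n" "X = y * z"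
        using a_set_elem_is_product by blast
      then show "X \<in> (\<lambda>(x, y, z). y * z) ` triples n" by force
    qed
  qed
qed

lemma a_eq_Suc_card_triples:
  assumes "n \<ge> 1"
  shows "a n = 1 + card (triples n)"
proof -
  have "finite (a_set n)" by (rule finite_subset[of _ "{0..int n}"]) (auto simp: a_set_def)
  moreover have "0 \<in> a_set n" using assms by (auto simp: a_set_def intro: exI[of _ 1])
  ultimately have "card (a_set n) = Suc (card (a_set n - {0}))" by (rule card_Suc_Diff1[symmetric])
  then show ?thesis using bij_betw_same_card[OF bij_betw_triples_a_set] a_eq_card_a_set by simp
qed

lemma int_triple_in_triples_iff:
  "(int x, int y, int z) \<in> triples n \<longleftrightarrow>
    y \<ge> 1 \<and> z \<ge> 1 \<and> n = x + y * (1 + (2 * x + 1) * z)"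
proof -
  have "int (x + y * (1 + (2 * x + 1) * z)) = int x + int y * (1 + (2 * int x + 1) * int z)"
    by (simp add: algebra_simps)
  then have "int n - int x = int y * (1 + (2 * int x + 1) * int z) \<longleftrightarrow>
      n = x + y * (1 + (2 * x + 1) * z)"
    by (metis add_diff_cancel_left' diff_add_cancel of_nat_eq_iff)
  then show ?thesis unfolding triples_iff by simp
qed

lemma divisor_cong_one_iff:
  fixes m N d :: nat
  assumes "m > 0" "N > 0"
  shows "d dvd N \<and> d > 1 \<and> [d = 1] (mod m) \<longleftrightarrow>
    (\<exists>y z. y \<ge> 1 \<and> z \<ge> 1 \<and> d = 1 + m * z \<and> N = y * d)"
proof
  assume d: "d dvd N \<and> d > 1 \<and> [d = 1] (mod m)"
  then obtain z where z: "d - 1 = m * z" using cong_to_1_nat by blast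
  obtain y where y: "N = y * d" using d by (metis dvdE mult.commute)
  have "z \<ge> 1" using d z by (cases z) auto
  moreover have "y \<ge> 1" using y \<open>N > 0\<close> by (cases y) auto
  moreover have "d = 1 + m * z" using d z by linarith
  ultimately show "\<exists>y z. y \<ge> 1 \<and> z \<ge> 1 \<and> d = 1 + m * z \<and> N = y * d"
    using y by blast
next
  assume "\<exists>y z. y \<ge> 1 \<and> z \<ge> 1 \<and> d = 1 + m * z \<and> N = y * d"
  then obtain y z where "z \<ge> 1" and d: "d = 1 + m * z" and N: "N = y * d" by blast
  have "d dvd N" unfolding N by (rule dvd_triv_right)
  moreover have "d > 1" using d \<open>z \<ge> 1\<close> \<open>m > 0\<close> by simp
  moreover have "[d = 1] (mod m)" unfolding d by (simp add: cong_altdef_nat)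
  ultimately show "d dvd N \<and> d > 1 \<and> [d = 1] (mod m)" by blast
qed

lemma card_factorizations_eq_D:
  fixes m N :: nat
  assumes "m > 0" "N > 0"
  shows "card {(y, z). y \<ge> 1 \<and> z \<ge> 1 \<and> N = y * (1 + m * z)} = D m N"
proof -
  let ?P = "{(y, z). y \<ge> 1 \<and> z \<ge> 1 \<and> N = y * (1 + m * z)}"
  have "bij_betw (\<lambda>(y, z). 1 + m * z) ?P {d. d dvd N \<and> d > 1 \<and> [d = 1] (mod m)}"
  proof (rule bij_betw_imageI)
    show "inj_on (\<lambda>(y, z). 1 + m * z) ?P"
    proof (rule inj_onI)
      fix p q assume "p \<in> ?P" "q \<in> ?P"
        and eq: "(\<lambda>(y, z). 1 + m * z) p = (\<lambda>(y, z). 1 + m * z) q"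
      obtain y1 z1 y2 z2 where pq: "p = (y1, z1)" "q = (y2, z2)" by (cases p, cases q)
      have "z1 = z2" using eq pq \<open>m > 0\<close> by simp
      with \<open>p \<in> ?P\<close> \<open>q \<in> ?P\<close> pq have "y1 * (1 + m * z1) = y2 * (1 + m * z1)" by simp
      then have "y1 = y2" using mult_right_cancel[of "1 + m * z1" y1 y2] by simp
      with \<open>z1 = z2\<close> pq show "p = q" by simp
    qed
    show "(\<lambda>(y, z). 1 + m * z) ` ?P = {d. d dvd N \<and> d > 1 \<and> [d = 1] (mod m)}"
    proof (rule Set.set_eqI)
      fix d
      have "d \<in> (\<lambda>(y, z). 1 + m * z) ` ?P \<longleftrightarrow>
          (\<exists>y z. y \<ge> 1 \<and> z \<ge> 1 \<and> d = 1 + m * z \<and> N = y * d)"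
        by (auto simp del: mult_Suc_right add_Suc_right)
      then show "d \<in> (\<lambda>(y, z). 1 + m * z) ` ?P \<longleftrightarrow>
          d \<in> {d. d dvd N \<and> d > 1 \<and> [d = 1] (mod m)}"
        using divisor_cong_one_iff[OF assms, of d] by simp
    qed
  qed
  then show ?thesis unfolding D_def by (rule bij_betw_same_card)
qed

lemma card_triples_fibre:
  assumes "j < n"
  shows "card {t \<in> triples n. fst t = int j} = D (2 * j + 1) (n - j)"
proof -
  let ?P = "{(y, z). y \<ge> 1 \<and> z \<ge> 1 \<and> n - j = y * (1 + (2 * j + 1) * z)}"
  have "{t \<in> triples n. fst t = int j} = (\<lambda>(y, z). (int j, int y, int z)) ` ?P"
  proof
    show "{t \<in> triples n. fst t = int j} \<subseteq> (\<lambda>(y, z). (int j, int y, int z)) ` ?P"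
    proof
      fix t assume "t \<in> {t \<in> triples n. fst t = int j}"
      then obtain y z where t: "(int j, y, z) \<in> triples n" and tjyz: "t = (int j, y, z)"
        by (cases t) auto
      then have "y \<ge> 0" "z \<ge> 0" by (simp_all add: triples_def)
      then obtain y' z' where "y = int y'" "z = int z'" by (metis nonneg_int_cases)
      with t tjyz assms show "t \<in> (\<lambda>(y, z). (int j, int y, int z)) ` ?P"
        by (force simp: int_triple_in_triples_iff)
    qed
    show "(\<lambda>(y, z). (int j, int y, int z)) ` ?P \<subseteq> {t \<in> triples n. fst t = int j}"
      using assms by (auto simp: int_triple_in_triples_iff)
  qed
  moreover have "inj_on (\<lambda>(y, z). (int j, int y, int z)) ?P" by (auto simp: inj_on_def)
  ultimately have "card {t \<in> triples n. fst t = int j} = card ?P" by (simp add: card_image)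
  also have "\<dots> = D (2 * j + 1) (n - j)" using assms by (intro card_factorizations_eq_D) simp_all
  finally show ?thesis .
qed

lemma card_triples_eq_sum_D: "card (triples n) = (\<Sum>j<n. D (2 * j + 1) (n - j))"
proof -
  have "nat (fst t) < n" if "t \<in> triples n" for t
  proof -
    obtain x y z where t: "t = (x, y, z)" by (cases t)
    have "x \<ge> 0" "y \<ge> 1" using that t by (simp_all add: triples_def)
    with triples_bounds[OF that[unfolded t]] have "x < int n" by linarith
    then show ?thesis using t \<open>x \<ge> 0\<close> by simp
  qed
  then have "(\<lambda>t. nat (fst t)) ` triples n \<subseteq> {..<n}" by auto
  then have "card (triples n) = (\<Sum>j<n. card {t \<in> triples n. nat (fst t) = j})"
    using sum.group[OF finite_triples finite_lessThan, where h = "\<lambda>_. 1 :: nat"] by simp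
  also have "\<dots> = (\<Sum>j<n. D (2 * j + 1) (n - j))"
  proof (rule sum.cong)
    fix j assume "j \<in> {..<n}"
    have "{t \<in> triples n. nat (fst t) = j} = {t \<in> triples n. fst t = int j}"
      by (auto simp: triples_def)
    then show "card {t \<in> triples n. nat (fst t) = j} = D (2 * j + 1) (n - j)"
      using card_triples_fibre \<open>j \<in> {..<n}\<close> by simp
  qed simp
  finally show ?thesis .
qed

theorem theorem11:
  fixes n :: nat
  assumes "n \<ge> 1"
  shows "a n = 1 + card {(x, y, z).
             (x::int) \<ge> 0 \<and> (y::int) \<ge> 1 \<and> (z::int) \<ge> 1 \<and> int n = 2 * x * y * z + y * z + x + y}
       \<and> a n = 1 + (\<Sum>j<n. D (2 * j + 1) (n - j))"
  using a_eq_Suc_card_triples[OF assms] card_triples_eq_sum_D[of n] unfolding triples_def by simp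

end
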